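(* Assume that for every periodic sequence $X$ of positive reals with some period $L$, and every $c\in[0,1]$, the limit $F_X(c):=\lim_{k\to\infty}F_X(k,c)$ exists and $c\mapsto F_X(c)$ is continuous on $[0,1]$. Then for every $M\in\mathbb{R}$ there exist $c>0$ and an integer $d>1$ such that $F_{X_d}(c)>M$.
   Context: For a sequence $X=(x_i)$ of positive reals and $1\le k\le n$, $S(X,n,k):=\binom{n}{k}^{-1}\sum_{1\le i_1<\cdots<i_k\le n}x_{i_1}\cdots x_{i_k}$. For $X$ periodic with period $L$: $F_X(k,c):=S(X,kL,\lceil ckL\rceil)^{1/\lceil ckL\rceil}$ for $c\in(0,1]$ and $F_X(k,0):=(x_1+\cdots+x_L)/L$. Let $P_{GK}(k)=\log_2\left(1+\frac{1}{k(k+2)}\right)$. For an integer $d>1$, $X_d$ is the periodic sequence of period $10d^2$ whose first $10d^2$ entries consist, for each $k\in\{2,\ldots,d\}$, of exactly $\lfloor P_{GK}(k)\cdot 10d^2\rfloor$ entries equal to $k$, with all remaining entries equal to $1$ (in any order; $F_{X_d}(k,c)$ does not depend on the order). *)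

theory Defs
  imports "HOL-Analysis.Analysis"
begin

text \<open>Sequences are indexed from 1: X 1, X 2, ... (the value X 0 is irrelevant).\<close>

definition S :: "(nat \<Rightarrow> real) \<Rightarrow> nat \<Rightarrow> nat \<Rightarrow> real" where
  "S X n k = (\<Sum>I\<in>{I. I \<subseteq> {1..n} \<and> card I = k}. \<Prod>i\<in>I. X i) / real (n choose k)"

definition periodic_pos :: "(nat \<Rightarrow> real) \<Rightarrow> nat \<Rightarrow> bool" where
  "periodic_pos X L \<longleftrightarrow> L \<ge> 1 \<and> (\<forall>i\<ge>1. X i > 0) \<and> (\<forall>i\<ge>1. X (i + L) = X i)"

definition F :: "(nat \<Rightarrow> real) \<Rightarrow> nat \<Rightarrow> nat \<Rightarrow> real \<Rightarrow> real" where
  "F X L k c = (if c = 0 then (\<Sum>i=1..L. X i) / real L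
     else (let m = nat \<lceil>c * real (k * L)\<rceil> in S X (k * L) m powr (1 / real m)))"

definition Flim :: "(nat \<Rightarrow> real) \<Rightarrow> nat \<Rightarrow> real \<Rightarrow> real" where
  "Flim X L c = lim (\<lambda>k. F X L k c)"

definition P_GK :: "nat \<Rightarrow> real" where
  "P_GK k = log 2 (1 + 1 / (real k * (real k + 2)))"

text \<open>Number of entries equal to k in one period of X_d.\<close>
definition cntd :: "nat \<Rightarrow> nat \<Rightarrow> nat" where
  "cntd d k = nat \<lfloor>P_GK k * real (10 * d^2)\<rfloor>"

text \<open>Cumulative counts: block for value k occupies positions cum(k-1) <= j < cum k
  (0-indexed within a period).\<close>
definition cumd :: "nat \<Rightarrow> nat \<Rightarrow> nat" where
  "cumd d k = (\<Sum>t\<in>{2..k}. cntd d t)"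

definition Xd :: "nat \<Rightarrow> nat \<Rightarrow> real" where
  "Xd d i = (let j = (i - 1) mod (10 * d^2) in
     if \<exists>k\<in>{2..d}. cumd d (k - 1) \<le> j \<and> j < cumd d k
     then real (THE k. k \<in> {2..d} \<and> cumd d (k - 1) \<le> j \<and> j < cumd d k)
     else 1)"

end

theory Submission
  imports Defs
begin

text \<open>F_X(k,0) is the mean of one period, hence so is F_X(0), and continuity of F_X at 0
  carries any lower bound on this mean over to F_X(c) for some small c > 0. In X_d the value k fills about 10 d^2 P_GK(k) places (the blocks fit
  into one period because \<Sum>_k P_GK(k) \<le> 1), and k P_GK(k) \<ge> 1/(2(k+2)), so the mean of X_d is
  at least (ln(d+3) - ln 4)/2 - 1/10, which is unbounded in d.\<close>

lemma log2_one_plus_le: "0 \<le> x \<Longrightarrow> log 2 (1 + x) \<le> 2 * x"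
proof -
  assume x: "0 \<le> x"
  have "ln (1 + x) \<le> x" using x by (rule ln_add_one_self_le_self)
  moreover have "1 / 2 \<le> ln (2::real)" using ln2_ge_two_thirds by linarith
  moreover have "0 \<le> ln (1 + x)" using x by simp
  ultimately have "ln (1 + x) / ln 2 \<le> x / (1 / 2)"
    by (intro frac_le) auto
  thus ?thesis by (simp add: log_def)
qed

lemma log2_one_plus_ge: "0 \<le> x \<Longrightarrow> x \<le> 1 / 2 \<Longrightarrow> x / 2 \<le> log 2 (1 + x)"
proof -
  assume x: "0 \<le> x" "x \<le> 1 / 2"
  have "x - x\<^sup>2 \<le> ln (1 + x)" using x by (intro ln_one_plus_pos_lower_bound) auto
  moreover have "x\<^sup>2 \<le> x / 2" using mult_left_mono[OF x(2) x(1)] by (simp add: power2_eq_square)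
  moreover have "ln (1 + x) \<le> ln (1 + x) / ln 2"
    using x ln_2_less_1 by (simp add: le_divide_eq mult_left_le)
  ultimately show ?thesis unfolding log_def by linarith
qed

lemma P_GK_le: "1 \<le> k \<Longrightarrow> P_GK k \<le> 2 / (real k * (real k + 2))"
  unfolding P_GK_def using log2_one_plus_le[of "1 / (real k * (real k + 2))"] by simp

lemma P_GK_ge: "1 \<le> k \<Longrightarrow> 1 / (2 * (real k * (real k + 2))) \<le> P_GK k"
proof -
  assume k: "1 \<le> k"
  have "1 * 3 \<le> real k * (real k + 2)" using k by (intro mult_mono) auto
  hence "1 / (real k * (real k + 2)) \<le> 1 / 2" by (simp add: divide_le_eq)
  hence "(1 / (real k * (real k + 2))) / 2 \<le> P_GK k"
    unfolding P_GK_def by (intro log2_one_plus_ge) auto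
  thus ?thesis by (simp add: mult.commute)
qed

lemma sum_two_div_k_k2_le: "(\<Sum>k=2..n. 2 / (real k * (real k + 2))) \<le> 1 - 2 / (real n + 1)"
  if "1 \<le> n"
  using that
proof (induction n rule: dec_induct)
  case (step n)
  have "2 / (real (Suc n) * (real (Suc n) + 2)) \<le> 2 / ((real n + 1) * (real n + 2))"
    by (intro divide_left_mono mult_mono) auto
  also have "\<dots> = 2 / (real n + 1) - 2 / (real (Suc n) + 1)"
    by (simp add: field_simps)
  finally show ?case using step.IH step.hyps by simp
qed simp

lemma sum_inverse_k2_ge: "ln (real n + 3) - ln 4 \<le> (\<Sum>k=2..n. 1 / (real k + 2))"
  if "1 \<le> n"
  using that
proof (induction n rule: dec_induct)
  case (step n)
  have "(real n + 3) * (1 + 1 / (real n + 3)) = real n + 4"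
    by (simp add: field_simps)
  hence "ln (real n + 4) = ln ((real n + 3) * (1 + 1 / (real n + 3)))"
    by simp
  also have "\<dots> = ln (real n + 3) + ln (1 + 1 / (real n + 3))"
    by (rule ln_mult_pos) (auto simp: add_pos_nonneg)
  also have "ln (1 + 1 / (real n + 3)) \<le> 1 / (real n + 3)"
    by (rule ln_add_one_self_le_self) simp
  finally show ?case using step.IH step.hyps by (simp add: add.commute add.left_commute)
qed simp

lemma cntd_le: "1 \<le> k \<Longrightarrow> real (cntd d k) \<le> P_GK k * real (10 * d\<^sup>2)"
proof -
  assume "1 \<le> k"
  have "0 \<le> P_GK k" by (rule order_trans[OF _ P_GK_ge[OF \<open>1 \<le> k\<close>]]) simp
  thus ?thesis unfolding cntd_def by simp
qed

lemma cntd_ge: "P_GK k * real (10 * d\<^sup>2) - 1 \<le> real (cntd d k)"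
  unfolding cntd_def by linarith

lemma cumd_mono: "a \<le> b \<Longrightarrow> cumd d a \<le> cumd d b"
  unfolding cumd_def by (intro sum_mono2) auto

lemma cumd_Suc: "1 \<le> n \<Longrightarrow> cumd d (Suc n) = cumd d n + cntd d (Suc n)"
  unfolding cumd_def by (simp add: add.commute)

lemma cumd_le_period: "cumd d d \<le> 10 * d\<^sup>2"
proof (cases "1 \<le> d")
  case True
  have "real (cumd d d) \<le> (\<Sum>k=2..d. 2 / (real k * (real k + 2)) * real (10 * d\<^sup>2))"
    unfolding cumd_def of_nat_sum
  proof (rule sum_mono)
    fix k assume "k \<in> {2..d}"
    hence k: "1 \<le> k" by simp
    show "real (cntd d k) \<le> 2 / (real k * (real k + 2)) * real (10 * d\<^sup>2)"
      using cntd_le[OF k, of d] P_GK_le[OF k]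
      by (meson mult_right_mono of_nat_0_le_iff order_trans)
  qed
  also have "\<dots> = (\<Sum>k=2..d. 2 / (real k * (real k + 2))) * real (10 * d\<^sup>2)"
    by (simp add: sum_distrib_right)
  also have "\<dots> \<le> real (10 * d\<^sup>2)"
  proof (rule mult_left_le_one_le)
    show "0 \<le> (\<Sum>k=2..d. 2 / (real k * (real k + 2)))" by (intro sum_nonneg) auto
    show "(\<Sum>k=2..d. 2 / (real k * (real k + 2))) \<le> 1"
      using sum_two_div_k_k2_le[OF True] divide_nonneg_nonneg[of 2 "real d + 1"] by linarith
  qed simp
  finally show ?thesis by linarith
qed (simp add: cumd_def)

lemma cumd_block_unique:
  assumes "cumd d (k - 1) \<le> j" "j < cumd d k" "cumd d (k' - 1) \<le> j" "j < cumd d k'"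
  shows "k = k'"
proof (rule ccontr)
  assume "k \<noteq> k'"
  then consider "k \<le> k' - 1" | "k' \<le> k - 1" by linarith
  then show False
    by cases (use assms cumd_mono[of k "k' - 1" d] cumd_mono[of k' "k - 1" d] in linarith)+
qed

lemma Xd_block:
  assumes k: "k \<in> {2..d}" and j: "cumd d (k - 1) \<le> j" "j < cumd d k"
  shows "Xd d (Suc j) = real k"
proof -
  have "cumd d k \<le> 10 * d\<^sup>2"
    using cumd_mono[of k d d] cumd_le_period[of d] k by simp
  hence "j mod (10 * d\<^sup>2) = j" using j by simp
  moreover have "(THE k. k \<in> {2..d} \<and> cumd d (k - 1) \<le> j \<and> j < cumd d k) = k"
    using k j by (intro the_equality) (auto intro: cumd_block_unique)
  ultimately show ?thesis using k j unfolding Xd_def Let_def by auto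
qed

lemma Xd_ge_one: "1 \<le> Xd d i"
proof (cases "\<exists>k\<in>{2..d}. cumd d (k - 1) \<le> (i - 1) mod (10 * d\<^sup>2)
                          \<and> (i - 1) mod (10 * d\<^sup>2) < cumd d k")
  case True
  then obtain k where k: "k \<in> {2..d}" and
      j: "cumd d (k - 1) \<le> (i - 1) mod (10 * d\<^sup>2)" "(i - 1) mod (10 * d\<^sup>2) < cumd d k"
    by blast
  have "Xd d i = Xd d (Suc ((i - 1) mod (10 * d\<^sup>2)))"
    unfolding Xd_def Let_def
    using cumd_le_period[of d] cumd_mono[of k d d] k j by auto
  also have "\<dots> = real k" using Xd_block[OF k j] .
  finally show ?thesis using k by simp
next
  case False
  then show ?thesis unfolding Xd_def Let_def by (simp only: if_not_P) simp
qed

lemma sum_Xd_blocks: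
  "1 \<le> n \<Longrightarrow> n \<le> d \<Longrightarrow> (\<Sum>j<cumd d n. Xd d (Suc j)) = (\<Sum>k=2..n. real k * real (cntd d k))"
proof (induction n rule: dec_induct)
  case base
  then show ?case by (simp add: cumd_def)
next
  case (step n)
  have split: "{..<cumd d (Suc n)} = {..<cumd d n} \<union> {cumd d n..<cumd d n + cntd d (Suc n)}"
    using cumd_Suc[OF step.hyps(1)] by auto
  have "(\<Sum>j\<in>{cumd d n..<cumd d n + cntd d (Suc n)}. Xd d (Suc j))
      = (\<Sum>j\<in>{cumd d n..<cumd d n + cntd d (Suc n)}. real (Suc n))"
    using step cumd_Suc[OF step.hyps(1)] by (intro sum.cong Xd_block) auto
  then have "(\<Sum>j<cumd d (Suc n). Xd d (Suc j))
      = (\<Sum>j<cumd d n. Xd d (Suc j)) + real (Suc n) * real (cntd d (Suc n))"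
    unfolding split by (subst sum.union_disjoint) auto
  then show ?case using step by simp
qed

lemma sum_period_Xd_ge:
  assumes "1 \<le> d"
  shows "(\<Sum>k=2..d. real k * real (cntd d k)) \<le> (\<Sum>i=1..10 * d\<^sup>2. Xd d i)"
proof -
  have "(\<Sum>k=2..d. real k * real (cntd d k)) = (\<Sum>j<cumd d d. Xd d (Suc j))"
    using sum_Xd_blocks[OF assms order_refl] by simp
  also have "\<dots> \<le> (\<Sum>j<10 * d\<^sup>2. Xd d (Suc j))"
    using cumd_le_period[of d] Xd_ge_one
    by (intro sum_mono2) (auto intro: order_trans[OF zero_le_one])
  finally show ?thesis by (simp add: sum.atLeast1_atMost_eq)
qed

lemma mean_Xd_ge:
  assumes d: "1 \<le> d"
  shows "(ln (real d + 3) - ln 4) / 2 - 1 / 10 \<le> (\<Sum>i=1..10 * d\<^sup>2. Xd d i) / real (10 * d\<^sup>2)"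
proof -
  define L where "L = real (10 * d\<^sup>2)"
  have L: "0 < L" using d by (simp add: L_def)
  have block_ge: "L / 2 * (1 / (real k + 2)) - real k \<le> real k * real (cntd d k)"
    if "k \<in> {2..d}" for k
  proof -
    have k: "1 \<le> k" using that by simp
    have cancel: "L / 2 * (1 / b) = a * (1 / (2 * (a * b)) * L)" if "a \<noteq> 0" "b \<noteq> 0" for a b :: real
      using that by (simp add: field_simps)
    have "L / 2 * (1 / (real k + 2)) = real k * (1 / (2 * (real k * (real k + 2))) * L)"
      using k by (intro cancel) simp_all
    also have "\<dots> \<le> real k * (P_GK k * L)"
      using P_GK_ge[OF k] L by (intro mult_left_mono mult_right_mono) auto
    also have "\<dots> \<le> real k * (real (cntd d k) + 1)"
      using cntd_ge[of k d] by (intro mult_left_mono) (auto simp: L_def)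
    finally show ?thesis by (simp add: algebra_simps)
  qed
  have "(\<Sum>k=2..d. real k) \<le> (\<Sum>k=2..d. real d)" by (intro sum_mono) auto
  also have "\<dots> \<le> real d * real d" by (simp add: mult_right_mono)
  finally have sum_k: "(\<Sum>k=2..d. real k) \<le> real d * real d" .
  have "L * ((ln (real d + 3) - ln 4) / 2 - 1 / 10)
      = L / 2 * (ln (real d + 3) - ln 4) - real d * real d"
    by (simp add: L_def field_simps power2_eq_square)
  also have "\<dots> \<le> L / 2 * (\<Sum>k=2..d. 1 / (real k + 2)) - (\<Sum>k=2..d. real k)"
    using sum_inverse_k2_ge[OF d] sum_k L by (intro diff_mono mult_left_mono) auto
  also have "\<dots> = (\<Sum>k=2..d. L / 2 * (1 / (real k + 2)) - real k)"
    by (simp add: sum_subtractf sum_distrib_left)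
  also have "\<dots> \<le> (\<Sum>k=2..d. real k * real (cntd d k))"
    by (rule sum_mono) (rule block_ge)
  also have "\<dots> \<le> (\<Sum>i=1..10 * d\<^sup>2. Xd d i)"
    by (rule sum_period_Xd_ge[OF d])
  finally show ?thesis using L by (simp add: L_def le_divide_eq mult.commute)
qed

lemma mean_Xd_unbounded: "\<exists>d>1. M < (\<Sum>i=1..10 * d\<^sup>2. Xd d i) / real (10 * d\<^sup>2)"
proof -
  define d where "d = nat \<lceil>exp (2 * \<bar>M\<bar> + 3)\<rceil> + 2"
  have "exp (2 * \<bar>M\<bar> + 3) \<le> real d + 3" unfolding d_def by linarith
  hence "2 * \<bar>M\<bar> + 3 \<le> ln (real d + 3)"
    using ln_le_cancel_iff[of "exp (2 * \<bar>M\<bar> + 3)" "real d + 3"] by simp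
  moreover have "ln (4::real) = 2 * ln 2"
    using ln_realpow[of 2 2] by simp
  ultimately have "M < (ln (real d + 3) - ln 4) / 2 - 1 / 10"
    using ln_2_less_1 abs_ge_self[of M] by (simp add: field_simps)
  moreover have "1 < d" by (simp add: d_def)
  ultimately show ?thesis using mean_Xd_ge[of d] by fastforce
qed

lemma periodic_pos_Xd: "1 \<le> d \<Longrightarrow> periodic_pos (Xd d) (10 * d\<^sup>2)"
proof -
  assume d: "1 \<le> d"
  have "Xd d (i + 10 * d\<^sup>2) = Xd d i" if "1 \<le> i" for i
  proof -
    have "i + 10 * d\<^sup>2 - 1 = (i - 1) + 10 * d\<^sup>2" using that by simp
    hence "(i + 10 * d\<^sup>2 - 1) mod (10 * d\<^sup>2) = (i - 1) mod (10 * d\<^sup>2)" by simp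
    thus ?thesis by (simp only: Xd_def Let_def)
  qed
  moreover have "0 < Xd d i" for i using Xd_ge_one[of d i] by linarith
  ultimately show ?thesis using d by (simp add: periodic_pos_def Suc_le_eq)
qed

lemma Flim_zero: "Flim X L 0 = (\<Sum>i=1..L. X i) / real L"
  by (simp add: Flim_def F_def)

lemma continuous_on_gt_at_pos:
  fixes f :: "real \<Rightarrow> real"
  assumes "continuous_on {0..1} f" and "M < f 0"
  shows "\<exists>c. 0 < c \<and> c \<le> 1 \<and> M < f c"
proof -
  have "(0::real) \<in> {0..1}" by simp
  hence "\<forall>e>0. \<exists>\<delta>>0. \<forall>x\<in>{0..1}. dist x 0 < \<delta> \<longrightarrow> dist (f x) (f 0) < e"
    using assms(1) unfolding continuous_on_iff by blast
  moreover have "0 < f 0 - M" using assms(2) by simp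
  ultimately obtain \<delta> where "0 < \<delta>"
    and \<delta>: "\<forall>x\<in>{0..1}. dist x 0 < \<delta> \<longrightarrow> dist (f x) (f 0) < f 0 - M"
    by blast
  define c where "c = min 1 (\<delta> / 2)"
  have c: "0 < c" "c \<le> 1" using \<open>0 < \<delta>\<close> by (auto simp: c_def)
  have "dist (f c) (f 0) < f 0 - M"
    using \<delta> c \<open>0 < \<delta>\<close> by (auto simp: c_def dist_real_def)
  thus ?thesis using c by (auto simp: dist_real_def)
qed

theorem lemma5p4:
  assumes "\<forall>X L. periodic_pos X L \<longrightarrow>
             (\<forall>c\<in>{0..1}. convergent (\<lambda>k. F X L k c)) \<and>
             continuous_on {0..1} (Flim X L)"
  shows "\<forall>M::real. \<exists>c::real. \<exists>d::nat. 0 < c \<and> c \<le> 1 \<and> d > 1 \<and>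
           Flim (Xd d) (10 * d^2) c > M"
proof
  fix M :: real
  obtain d where d: "1 < d" and "M < (\<Sum>i=1..10 * d\<^sup>2. Xd d i) / real (10 * d\<^sup>2)"
    using mean_Xd_unbounded by blast
  hence "M < Flim (Xd d) (10 * d\<^sup>2) 0" by (simp add: Flim_zero)
  moreover have "continuous_on {0..1} (Flim (Xd d) (10 * d\<^sup>2))"
    using assms periodic_pos_Xd d by simp
  ultimately show "\<exists>c d. 0 < c \<and> c \<le> 1 \<and> d > 1 \<and> Flim (Xd d) (10 * d^2) c > M"
    using continuous_on_gt_at_pos d by blast
qed

end
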